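(* Assume the standing assumptions on $A,\Omega,R,K$ in the context and that there exists $\theta_0\in]-A,A[$ with $\min_{\theta\in]-A,A[}\lambda(\theta,0)=\lambda(\theta_0,0)<0$. For $\varepsilon\in]0,\varepsilon_0[$ let $n_\varepsilon$ be a positive bounded solution of (E) and $\rho_\varepsilon(x)=\int_{-A}^An_\varepsilon(x,\theta)d\theta$. Then $0\le\rho_\varepsilon\le C_R$ for all $\varepsilon<\varepsilon_0$. Moreover, for $p\in[1,+\infty]$ there exists $C>0$ such that $\|\rho_\varepsilon\|_{W^{2,p}(\Omega)}\le C$ for all $\varepsilon$ small enough.
   Context: Standing assumptions: $A>0$; $\Omega=\bigcup_{i=1}^m ]a_i,b_i[\subset\mathbb{R}$ with $a_1<b_1<\dots<a_m<b_m$; $R\in C^1(\overline\Omega\times[-A,A])$ with $\|R\|_{W^{1,\infty}(\Omega\times]-A,A[)}<C_R$ for a constant $C_R$; $K$ is a $C^1$ even function with $K>0$, $0<c_K<K<C_K$, $|K'|<C_K$. $L\phi(x)=\int_\Omega[\phi(x)-\phi(y)]K(x-y)dy$. $\lambda(\theta,\rho)$ is the principal eigenvalue of $\psi\mapsto-\psi''+L\psi-(R(\cdot,\theta)-\rho)\psi$ on $\Omega$ with Neumann boundary conditions. $\mu_\varepsilon$ is the principal eigenvalue of $\xi\mapsto-\partial_{xx}\xi-\varepsilon^2\partial_{\theta\theta}\xi+L\xi-R\xi$ on $\Omega\times]-A,A[$ with Neumann boundary conditions; $\varepsilon_0>0$ is such that $\mu_\varepsilon<\lambda(\theta_0,0)/2$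 for $\varepsilon\in]0,\varepsilon_0[$. Problem (E): $-\varepsilon^2\partial_{\theta\theta}n_\varepsilon-\partial_{xx}n_\varepsilon+Ln_\varepsilon=n_\varepsilon(R-\rho_\varepsilon)$ in $\Omega\times]-A,A[$ ($L$ acting in $x$), $\partial_{\nu_x}n_\varepsilon=0$ on $\partial\Omega\times]-A,A[$, $\partial_{\nu_\theta}n_\varepsilon=0$ on $\Omega\times\{\pm A\}$. *)

theory Defs
  imports "HOL-Analysis.Analysis" "HOL-Probability.Essential_Supremum"
begin

definition Omega :: "(nat \<Rightarrow> real) \<Rightarrow> (nat \<Rightarrow> real) \<Rightarrow> nat \<Rightarrow> real set" where
  "Omega a b m = (\<Union>i<m. {a i<..<b i})"

definition admissible_intervals :: "(nat \<Rightarrow> real) \<Rightarrow> (nat \<Rightarrow> real) \<Rightarrow> nat \<Rightarrow> bool" where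
  "admissible_intervals a b m \<longleftrightarrow> m \<ge> 1 \<and> (\<forall>i<m. a i < b i) \<and> (\<forall>i. Suc i < m \<longrightarrow> b i < a (Suc i))"

text \<open>R is C^1 on closure(Omega) x [-A,A] (continuous partial derivatives up to the boundary of
  each closed rectangle [a_i,b_i] x [-A,A]) and its W^{1,infinity}(Omega x ]-A,A[) norm
  (sup |R| + sup |d_x R| + sup |d_theta R|) is < C_R.\<close>
definition R_hyp :: "(nat \<Rightarrow> real) \<Rightarrow> (nat \<Rightarrow> real) \<Rightarrow> nat \<Rightarrow> real \<Rightarrow> (real \<Rightarrow> real \<Rightarrow> real) \<Rightarrow> real \<Rightarrow> bool" where
  "R_hyp a b m A R C_R \<longleftrightarrow>
    (\<exists>Rx Rt.
      (\<forall>i<m. continuous_on ({a i..b i} \<times> {-A..A}) (\<lambda>(x,t). R x t)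
           \<and> continuous_on ({a i..b i} \<times> {-A..A}) (\<lambda>(x,t). Rx x t)
           \<and> continuous_on ({a i..b i} \<times> {-A..A}) (\<lambda>(x,t). Rt x t)
           \<and> (\<forall>x\<in>{a i..b i}. \<forall>t\<in>{-A..A}.
                ((\<lambda>y. R y t) has_real_derivative Rx x t) (at x within {a i..b i})
              \<and> ((\<lambda>s. R x s) has_real_derivative Rt x t) (at t within {-A..A})))
    \<and> (SUP z\<in>Omega a b m \<times> {-A<..<A}. \<bar>R (fst z) (snd z)\<bar>)
      + (SUP z\<in>Omega a b m \<times> {-A<..<A}. \<bar>Rx (fst z) (snd z)\<bar>)
      + (SUP z\<in>Omega a b m \<times> {-A<..<A}. \<bar>Rt (fst z) (snd z)\<bar>) < C_R)"

definition K_hyp :: "(real \<Rightarrow> real) \<Rightarrow> real \<Rightarrow> real \<Rightarrow> bool" where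
  "K_hyp K c_K C_K \<longleftrightarrow>
    (\<exists>K'. (\<forall>x. (K has_real_derivative K' x) (at x)) \<and> continuous_on UNIV K'
       \<and> (\<forall>x. \<bar>K' x\<bar> < C_K))
    \<and> (\<forall>x. K (- x) = K x) \<and> 0 < c_K \<and> (\<forall>x. c_K < K x \<and> K x < C_K)"

definition Lop :: "real set \<Rightarrow> (real \<Rightarrow> real) \<Rightarrow> (real \<Rightarrow> real) \<Rightarrow> real \<Rightarrow> real" where
  "Lop \<Omega> K \<phi> x = integral \<Omega> (\<lambda>y. (\<phi> x - \<phi> y) * K (x - y))"

definition C2_neumann_1d :: "(nat \<Rightarrow> real) \<Rightarrow> (nat \<Rightarrow> real) \<Rightarrow> nat \<Rightarrow>
    (real \<Rightarrow> real) \<Rightarrow> (real \<Rightarrow> real) \<Rightarrow> (real \<Rightarrow> real) \<Rightarrow> bool" where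
  "C2_neumann_1d a b m \<psi> \<psi>1 \<psi>2 \<longleftrightarrow>
    (\<forall>i<m. (\<forall>x\<in>{a i..b i}. (\<psi> has_real_derivative \<psi>1 x) (at x within {a i..b i})
                         \<and> (\<psi>1 has_real_derivative \<psi>2 x) (at x within {a i..b i}))
          \<and> continuous_on {a i..b i} \<psi>2
          \<and> \<psi>1 (a i) = 0 \<and> \<psi>1 (b i) = 0)"

definition C2_neumann_2d :: "(nat \<Rightarrow> real) \<Rightarrow> (nat \<Rightarrow> real) \<Rightarrow> nat \<Rightarrow> real \<Rightarrow>
    (real \<Rightarrow> real \<Rightarrow> real) \<Rightarrow> (real \<Rightarrow> real \<Rightarrow> real) \<Rightarrow> (real \<Rightarrow> real \<Rightarrow> real) \<Rightarrow>
    (real \<Rightarrow> real \<Rightarrow> real) \<Rightarrow> (real \<Rightarrow> real \<Rightarrow> real) \<Rightarrow> bool" where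
  "C2_neumann_2d a b m A u ux uxx ut utt \<longleftrightarrow>
    (\<forall>i<m.
       (\<forall>f\<in>{u, ux, uxx, ut, utt}. continuous_on ({a i..b i} \<times> {-A..A}) (\<lambda>(x,t). f x t))
     \<and> (\<forall>x\<in>{a i..b i}. \<forall>t\<in>{-A..A}.
          ((\<lambda>y. u y t) has_real_derivative ux x t) (at x within {a i..b i})
        \<and> ((\<lambda>y. ux y t) has_real_derivative uxx x t) (at x within {a i..b i})
        \<and> ((\<lambda>s. u x s) has_real_derivative ut x t) (at t within {-A..A})
        \<and> ((\<lambda>s. ut x s) has_real_derivative utt x t) (at t within {-A..A}))
     \<and> (\<forall>t\<in>{-A<..<A}. ux (a i) t = 0 \<and> ux (b i) t = 0))
    \<and> (\<forall>x\<in>Omega a b m. ut x (-A) = 0 \<and> ut x A = 0)"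

text \<open>lambda(theta, rho): principal eigenvalue (the eigenvalue with a positive eigenfunction) of
  psi \<mapsto> -psi'' + L psi - (R(.,theta) - rho) psi on Omega, Neumann boundary conditions.\<close>
definition lambda_pe :: "(nat \<Rightarrow> real) \<Rightarrow> (nat \<Rightarrow> real) \<Rightarrow> nat \<Rightarrow> (real \<Rightarrow> real) \<Rightarrow>
    (real \<Rightarrow> real \<Rightarrow> real) \<Rightarrow> real \<Rightarrow> (real \<Rightarrow> real) \<Rightarrow> real" where
  "lambda_pe a b m K R \<theta> \<rho> = (THE l. \<exists>\<psi> \<psi>1 \<psi>2.
      C2_neumann_1d a b m \<psi> \<psi>1 \<psi>2 \<and> (\<forall>x\<in>Omega a b m. \<psi> x > 0) \<and>
      (\<forall>x\<in>Omega a b m. - \<psi>2 x + Lop (Omega a b m) K \<psi> x - (R x \<theta> - \<rho> x) * \<psi> x = l * \<psi> x))"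

definition mu_pe :: "(nat \<Rightarrow> real) \<Rightarrow> (nat \<Rightarrow> real) \<Rightarrow> nat \<Rightarrow> real \<Rightarrow> (real \<Rightarrow> real) \<Rightarrow>
    (real \<Rightarrow> real \<Rightarrow> real) \<Rightarrow> real \<Rightarrow> real" where
  "mu_pe a b m A K R \<epsilon> = (THE l. \<exists>\<xi> \<xi>x \<xi>xx \<xi>t \<xi>tt.
      C2_neumann_2d a b m A \<xi> \<xi>x \<xi>xx \<xi>t \<xi>tt \<and>
      (\<forall>x\<in>Omega a b m. \<forall>t\<in>{-A<..<A}. \<xi> x t > 0) \<and>
      (\<forall>x\<in>Omega a b m. \<forall>t\<in>{-A<..<A}.
         - \<xi>xx x t - \<epsilon>\<^sup>2 * \<xi>tt x t + Lop (Omega a b m) K (\<lambda>y. \<xi> y t) x - R x t * \<xi> x t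
           = l * \<xi> x t))"

definition rho_of :: "real \<Rightarrow> (real \<Rightarrow> real \<Rightarrow> real) \<Rightarrow> real \<Rightarrow> real" where
  "rho_of A n x = integral {-A..A} (\<lambda>t. n x t)"

definition pos_bdd_sol_E :: "(nat \<Rightarrow> real) \<Rightarrow> (nat \<Rightarrow> real) \<Rightarrow> nat \<Rightarrow> real \<Rightarrow> (real \<Rightarrow> real) \<Rightarrow>
    (real \<Rightarrow> real \<Rightarrow> real) \<Rightarrow> real \<Rightarrow> (real \<Rightarrow> real \<Rightarrow> real) \<Rightarrow> bool" where
  "pos_bdd_sol_E a b m A K R \<epsilon> n \<longleftrightarrow>
    (\<exists>nx nxx nt ntt. C2_neumann_2d a b m A n nx nxx nt ntt \<and>
      (\<forall>x\<in>Omega a b m. \<forall>t\<in>{-A<..<A}.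
         - \<epsilon>\<^sup>2 * ntt x t - nxx x t + Lop (Omega a b m) K (\<lambda>y. n y t) x
           = n x t * (R x t - rho_of A n x)))
    \<and> (\<forall>x\<in>Omega a b m. \<forall>t\<in>{-A<..<A}. n x t > 0)
    \<and> (\<exists>M. \<forall>x\<in>Omega a b m. \<forall>t\<in>{-A<..<A}. n x t \<le> M)"

definition test_fun :: "real set \<Rightarrow> (real \<Rightarrow> real) \<Rightarrow> bool" where
  "test_fun \<Omega> \<phi> \<longleftrightarrow> (\<forall>k x. ((deriv ^^ k) \<phi>) differentiable (at x))
     \<and> (\<exists>S. compact S \<and> S \<subseteq> \<Omega> \<and> (\<forall>x. x \<notin> S \<longrightarrow> \<phi> x = 0))"

definition weak_deriv :: "real set \<Rightarrow> (real \<Rightarrow> real) \<Rightarrow> (real \<Rightarrow> real) \<Rightarrow> bool" where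
  "weak_deriv \<Omega> f g \<longleftrightarrow>
    (\<forall>S. compact S \<and> S \<subseteq> \<Omega> \<longrightarrow> set_integrable lborel S f \<and> set_integrable lborel S g)
    \<and> (\<forall>\<phi>. test_fun \<Omega> \<phi> \<longrightarrow>
         (LINT x:\<Omega>|lborel. f x * deriv \<phi> x) = - (LINT x:\<Omega>|lborel. g x * \<phi> x))"

definition Lp_norm :: "real set \<Rightarrow> ennreal \<Rightarrow> (real \<Rightarrow> real) \<Rightarrow> ennreal" where
  "Lp_norm \<Omega> p f =
    (if p = \<infinity> then esssup lborel (\<lambda>x. ennreal (indicator \<Omega> x * \<bar>f x\<bar>))
     else (let q = enn2real p;
               I = (\<integral>\<^sup>+ x. ennreal (indicator \<Omega> x * \<bar>f x\<bar> powr q) \<partial>lborel)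
           in if I = \<infinity> then \<infinity> else ennreal (enn2real I powr (1 / q))))"

definition W2p_norm_le :: "real set \<Rightarrow> ennreal \<Rightarrow> (real \<Rightarrow> real) \<Rightarrow> real \<Rightarrow> bool" where
  "W2p_norm_le \<Omega> p f C \<longleftrightarrow>
    (\<exists>g1 g2. (\<lambda>x. indicator \<Omega> x * f x) \<in> borel_measurable lborel
      \<and> (\<lambda>x. indicator \<Omega> x * g1 x) \<in> borel_measurable lborel
      \<and> (\<lambda>x. indicator \<Omega> x * g2 x) \<in> borel_measurable lborel
      \<and> weak_deriv \<Omega> f g1 \<and> weak_deriv \<Omega> g1 g2
      \<and> Lp_norm \<Omega> p f + Lp_norm \<Omega> p g1 + Lp_norm \<Omega> p g2 \<le> ennreal C)"

end

theory Submission
  imports Defs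
begin

(* Integrating (E) in theta removes the eps^2-term (Neumann condition at theta = -A, A) and,
   by Fubini, turns L n into L rho, so that
     - rho'' + L rho = (integral of n R over theta) - rho^2   on the closure of Omega.
   At a maximum point of rho the Neumann condition in x gives rho'' <= 0, and K > 0 gives
   L rho >= 0; hence rho^2 <= C_R rho, i.e. rho <= C_R, with no use of eps.  The same identity
   then bounds rho'' uniformly, rho' is bounded since it vanishes at the endpoints, and uniform
   bounds on the bounded set Omega bound every L^p norm. *)

section \<open>Integrals and Sobolev norms on Omega\<close>

lemma admissible_intervals_lt: "admissible_intervals a b m \<Longrightarrow> i < m \<Longrightarrow> a i < b i"
  unfolding admissible_intervals_def by auto

lemma admissible_intervals_sorted:
  assumes "admissible_intervals a b m" "i < j" "j < m"
  shows "b i < a j"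
  using assms(2,3)
proof (induction j)
  case (Suc k)
  have "b k < a (Suc k)" "i < k \<Longrightarrow> a k < b k"
    using assms(1) Suc.prems unfolding admissible_intervals_def by auto
  with Suc show ?case by (cases "i = k") force+
qed simp

lemma admissible_intervals_disjoint:
  assumes "admissible_intervals a b m" "i < m" "j < m" "i \<noteq> j"
  shows "{a i<..<b i} \<inter> {a j<..<b j} = {}"
  using admissible_intervals_sorted[OF assms(1), of i j] admissible_intervals_sorted[OF assms(1), of j i] assms(2-4)
  by (cases i j rule: linorder_cases) auto

lemma open_Omega: "open (Omega a b m)"
  unfolding Omega_def by auto

lemma Ioo_subset_Omega: "i < m \<Longrightarrow> {a i<..<b i} \<subseteq> Omega a b m"
  unfolding Omega_def by auto

lemma Omega_subset_Icc: "Omega a b m \<subseteq> (\<Union>i<m. {a i..b i})"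
  unfolding Omega_def by auto

lemma endpoints_notin_Omega:
  assumes adm: "admissible_intervals a b m" and i: "i < m"
  shows "a i \<notin> Omega a b m" "b i \<notin> Omega a b m"
proof -
  have "a i \<notin> {a j<..<b j} \<and> b i \<notin> {a j<..<b j}" if j: "j < m" for j
    using admissible_intervals_sorted[OF adm, of i j] admissible_intervals_sorted[OF adm, of j i]
      admissible_intervals_lt[OF adm i] admissible_intervals_lt[OF adm j] i j
    by (cases j i rule: linorder_cases) auto
  then show "a i \<notin> Omega a b m" "b i \<notin> Omega a b m"
    unfolding Omega_def by auto
qed

lemma has_integral_Omega:
  fixes h :: "real \<Rightarrow> real"
  assumes "admissible_intervals a b m" "\<And>i. i < m \<Longrightarrow> (h has_integral v i) {a i..b i}"
  shows "(h has_integral (\<Sum>i<m. v i)) (Omega a b m)"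
  unfolding Omega_def
proof (rule has_integral_UN)
  show "(h has_integral v i) {a i<..<b i}" if "i \<in> {..<m}" for i
    using assms(2) that by (simp add: has_integral_Icc_iff_Ioo[symmetric])
  show "pairwise (\<lambda>i j. negligible ({a i<..<b i} \<inter> {a j<..<b j})) {..<m}"
    unfolding pairwise_def using admissible_intervals_disjoint[OF assms(1)] by auto
qed simp

lemma integral_Omega:
  fixes h :: "real \<Rightarrow> real"
  assumes "admissible_intervals a b m" "\<And>i. i < m \<Longrightarrow> h integrable_on {a i..b i}"
  shows "integral (Omega a b m) h = (\<Sum>i<m. integral {a i..b i} h)"
    and "h integrable_on Omega a b m"
  using has_integral_Omega[OF assms(1), of h "\<lambda>i. integral {a i..b i} h"] assms(2)
  by (auto intro: integral_unique)

lemma borel_measurable_indicator_Omega: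
  fixes f :: "real \<Rightarrow> real"
  assumes "\<And>i. i < m \<Longrightarrow> continuous_on {a i..b i} f"
  shows "(\<lambda>x. indicator (Omega a b m) x * f x) \<in> borel_measurable lborel"
proof -
  have "continuous_on (Omega a b m) f"
    unfolding Omega_def
    by (rule continuous_on_open_UN) (auto intro: continuous_on_subset[OF assms])
  from borel_measurable_continuous_on_indicator[OF borel_open[OF open_Omega] this]
  show ?thesis by simp
qed

lemma set_integral_Omega:
  fixes f :: "real \<Rightarrow> real"
  assumes adm: "admissible_intervals a b m" and f: "\<And>i. i < m \<Longrightarrow> continuous_on {a i..b i} f"
  shows "set_integrable lborel (Omega a b m) f"
    and "(LINT x:Omega a b m|lborel. f x) = (\<Sum>i<m. integral {a i..b i} f)"
proof -
  have "set_integrable lebesgue (\<Union>i<m. {a i..b i}) f"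
    by (rule set_integrable_UN) (auto intro: absolutely_integrable_continuous_real f)
  then have L: "set_integrable lebesgue (Omega a b m) f"
    by (rule set_integrable_subset) (auto simp: Omega_subset_Icc open_Omega)
  have M: "(\<lambda>x. indicator (Omega a b m) x *\<^sub>R f x) \<in> borel_measurable lborel"
    using borel_measurable_indicator_Omega[OF f] by simp
  show "set_integrable lborel (Omega a b m) f"
    using L integrable_completion[OF M] unfolding set_integrable_def by simp
  have "(LINT x:Omega a b m|lborel. f x) = integral (Omega a b m) f"
    using integral_completion[OF M] set_lebesgue_integral_eq_integral(2)[OF L]
    unfolding set_lebesgue_integral_def by simp
  also have "\<dots> = (\<Sum>i<m. integral {a i..b i} f)"
    by (rule integral_Omega(1)[OF adm]) (auto intro: integrable_continuous_interval f)
  finally show "(LINT x:Omega a b m|lborel. f x) = (\<Sum>i<m. integral {a i..b i} f)" .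
qed

definition Omega_length :: "(nat \<Rightarrow> real) \<Rightarrow> (nat \<Rightarrow> real) \<Rightarrow> nat \<Rightarrow> real" where
  "Omega_length a b m = (\<Sum>i<m. b i - a i)"

lemma emeasure_Omega_le:
  assumes "admissible_intervals a b m"
  shows "emeasure lborel (Omega a b m) \<le> ennreal (Omega_length a b m)"
proof -
  have "emeasure lborel (Omega a b m) \<le> (\<Sum>i<m. emeasure lborel {a i<..<b i})"
    unfolding Omega_def by (rule emeasure_subadditive_finite) auto
  also have "\<dots> = (\<Sum>i<m. ennreal (b i - a i))"
    using admissible_intervals_lt[OF assms] by (intro sum.cong) (auto simp: less_imp_le)
  also have "\<dots> = ennreal (Omega_length a b m)"
    unfolding Omega_length_def using admissible_intervals_lt[OF assms]
    by (intro sum_ennreal) (auto simp: less_imp_le)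
  finally show ?thesis .
qed

lemma interval_length_le_Omega_length:
  "admissible_intervals a b m \<Longrightarrow> i < m \<Longrightarrow> b i - a i \<le> Omega_length a b m"
  unfolding Omega_length_def
  by (rule member_le_sum) (auto dest: admissible_intervals_lt intro: less_imp_le)

lemma Omega_length_pos: "admissible_intervals a b m \<Longrightarrow> 0 < Omega_length a b m"
  using interval_length_le_Omega_length[of a b m 0] admissible_intervals_lt[of a b m 0]
  unfolding admissible_intervals_def by fastforce

lemma weak_deriv_Omega:
  fixes f g :: "real \<Rightarrow> real"
  assumes adm: "admissible_intervals a b m"
    and f: "\<And>i. i < m \<Longrightarrow> continuous_on {a i..b i} f"
    and g: "\<And>i. i < m \<Longrightarrow> continuous_on {a i..b i} g"
    and fg: "\<And>i x. i < m \<Longrightarrow> x \<in> {a i..b i} \<Longrightarrow> (f has_real_derivative g x) (at x within {a i..b i})"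
  shows "weak_deriv (Omega a b m) f g"
  unfolding weak_deriv_def
proof (rule conjI; intro allI impI)
  fix S :: "real set" assume S: "compact S \<and> S \<subseteq> Omega a b m"
  then have "S \<in> sets lborel" by (auto intro: borel_closed compact_imp_closed)
  with S show "set_integrable lborel S f \<and> set_integrable lborel S g"
    using set_integrable_subset set_integral_Omega(1)[OF adm f] set_integral_Omega(1)[OF adm g]
    by blast
next
  fix \<phi> assume "test_fun (Omega a b m) \<phi>"
  then have "\<phi> differentiable (at x)" "deriv \<phi> differentiable (at x)"
    and "\<exists>S. compact S \<and> S \<subseteq> Omega a b m \<and> (\<forall>x. x \<notin> S \<longrightarrow> \<phi> x = 0)" for x
    unfolding test_fun_def by (metis funpow_0 funpow_Suc_right o_apply)+
  then have \<phi>': "\<And>x. (\<phi> has_real_derivative deriv \<phi> x) (at x)"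
    and \<phi>_cont: "\<And>U. continuous_on U \<phi>" and \<phi>'_cont: "\<And>U. continuous_on U (deriv \<phi>)"
    and \<phi>_end: "\<And>i. i < m \<Longrightarrow> \<phi> (a i) = 0 \<and> \<phi> (b i) = 0"
    using endpoints_notin_Omega[OF adm]
    by (auto simp: DERIV_deriv_iff_real_differentiable
        intro: continuous_at_imp_continuous_on differentiable_imp_continuous_within)
  have parts: "integral {a i..b i} (\<lambda>x. f x * deriv \<phi> x) = - integral {a i..b i} (\<lambda>x. g x * \<phi> x)"
    if i: "i < m" for i
  proof -
    have "((\<lambda>x. g x * \<phi> x) has_integral - integral {a i..b i} (\<lambda>x. f x * deriv \<phi> x)) {a i..b i}"
    proof (rule integration_by_parts_interior[OF bounded_bilinear_mult _ f[OF i] \<phi>_cont])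
      show "a i \<le> b i" using admissible_intervals_lt[OF adm i] by simp
      show "(f has_vector_derivative g x) (at x)" if "x \<in> {a i<..<b i}" for x
        using fg[OF i, of x] that
        by (simp add: at_within_Icc_at has_real_derivative_iff_has_vector_derivative[symmetric])
      show "(\<phi> has_vector_derivative deriv \<phi> x) (at x)" for x
        using \<phi>' by (simp add: has_real_derivative_iff_has_vector_derivative)
      have "(\<lambda>x. f x * deriv \<phi> x) integrable_on {a i..b i}"
        by (auto intro!: integrable_continuous_interval continuous_intros f[OF i] \<phi>'_cont)
      then show "((\<lambda>x. f x * deriv \<phi> x) has_integral
          f (b i) * \<phi> (b i) - f (a i) * \<phi> (a i) - - integral {a i..b i} (\<lambda>x. f x * deriv \<phi> x)) {a i..b i}"
        using \<phi>_end[OF i] by (simp add: has_integral_integral)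
    qed
    then show ?thesis by (simp add: integral_unique)
  qed
  have "(LINT x:Omega a b m|lborel. f x * deriv \<phi> x) = (\<Sum>i<m. integral {a i..b i} (\<lambda>x. f x * deriv \<phi> x))"
    by (rule set_integral_Omega(2)[OF adm]) (auto intro!: continuous_intros f \<phi>'_cont)
  also have "\<dots> = - (\<Sum>i<m. integral {a i..b i} (\<lambda>x. g x * \<phi> x))"
    by (simp add: parts sum_negf)
  also have "(\<Sum>i<m. integral {a i..b i} (\<lambda>x. g x * \<phi> x)) = (LINT x:Omega a b m|lborel. g x * \<phi> x)"
    by (rule set_integral_Omega(2)[OF adm, symmetric]) (auto intro!: continuous_intros g \<phi>_cont)
  finally show "(LINT x:Omega a b m|lborel. f x * deriv \<phi> x) = - (LINT x:Omega a b m|lborel. g x * \<phi> x)" .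
qed

lemma Lp_norm_le_bounded:
  fixes f :: "real \<Rightarrow> real"
  assumes meas: "(\<lambda>x. indicator \<Omega> x * f x) \<in> borel_measurable lborel"
    and \<Omega>: "\<Omega> \<in> sets lborel" "emeasure lborel \<Omega> \<le> ennreal D" "0 \<le> D"
    and bound: "\<And>x. x \<in> \<Omega> \<Longrightarrow> \<bar>f x\<bar> \<le> B" "0 \<le> B"
    and p: "p \<ge> 1"
  shows "Lp_norm \<Omega> p f \<le> ennreal (B * max 1 D)"
proof (cases p)
  case top
  have "(\<lambda>x. ennreal \<bar>indicator \<Omega> x * f x\<bar>) \<in> borel_measurable lborel"
    using meas by measurable
  then have "(\<lambda>x. ennreal (indicator \<Omega> x * \<bar>f x\<bar>)) \<in> borel_measurable lborel"
    by (simp add: abs_mult)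
  then have "esssup lborel (\<lambda>x. ennreal (indicator \<Omega> x * \<bar>f x\<bar>)) \<le> ennreal B"
    by (rule esssup_I) (use bound in \<open>auto simp: indicator_def\<close>)
  also have "\<dots> \<le> ennreal (B * max 1 D)"
    using bound(2) by (intro ennreal_leI) (auto simp: max_def mult_le_cancel_left1)
  finally show ?thesis using top unfolding Lp_norm_def by simp
next
  case (real q)
  with p have q: "1 \<le> q" "enn2real p = q" "p \<noteq> \<infinity>" by auto
  define I where "I = (\<integral>\<^sup>+ x. ennreal (indicator \<Omega> x * \<bar>f x\<bar> powr q) \<partial>lborel)"
  have "I \<le> (\<integral>\<^sup>+ x. ennreal (B powr q) * indicator \<Omega> x \<partial>lborel)"
    unfolding I_def
    by (rule nn_integral_mono) (use bound q in \<open>auto simp: indicator_def intro!: powr_mono2\<close>)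
  also have "\<dots> = ennreal (B powr q) * emeasure lborel \<Omega>"
    by (rule nn_integral_cmult_indicator[OF \<Omega>(1)])
  also have "\<dots> \<le> ennreal (B powr q * D)"
    using \<Omega>(2,3) by (simp add: ennreal_mult'' mult_left_mono)
  finally have I: "I \<le> ennreal (B powr q * D)" .
  then have "I \<noteq> \<infinity>" by (auto simp: top_unique)
  have "enn2real I powr (1 / q) \<le> (B powr q * D) powr (1 / q)"
    using I \<Omega>(3) bound(2) q by (intro powr_mono2 enn2real_leI) auto
  also have "\<dots> = B * D powr (1 / q)"
    using \<Omega>(3) bound(2) q by (simp add: powr_mult powr_powr)
  also have "\<dots> \<le> B * max 1 D"
  proof (rule mult_left_mono[OF _ bound(2)])
    have "D powr (1 / q) \<le> max 1 D powr (1 / q)"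
      using \<Omega>(3) q by (intro powr_mono2) auto
    also have "\<dots> \<le> max 1 D powr 1"
      using q by (intro powr_mono) auto
    finally show "D powr (1 / q) \<le> max 1 D" by simp
  qed
  finally show ?thesis
    unfolding Lp_norm_def using q \<open>I \<noteq> \<infinity>\<close> by (simp add: Let_def I_def[symmetric] ennreal_leI)
qed

lemma W2p_norm_le_of_C2:
  fixes f f' f'' :: "real \<Rightarrow> real"
  assumes adm: "admissible_intervals a b m"
    and cont: "\<And>i. i < m \<Longrightarrow> continuous_on {a i..b i} f"
              "\<And>i. i < m \<Longrightarrow> continuous_on {a i..b i} f'"
              "\<And>i. i < m \<Longrightarrow> continuous_on {a i..b i} f''"
    and deriv: "\<And>i x. i < m \<Longrightarrow> x \<in> {a i..b i} \<Longrightarrow> (f has_real_derivative f' x) (at x within {a i..b i})"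
               "\<And>i x. i < m \<Longrightarrow> x \<in> {a i..b i} \<Longrightarrow> (f' has_real_derivative f'' x) (at x within {a i..b i})"
    and bound: "\<And>x. x \<in> Omega a b m \<Longrightarrow> \<bar>f x\<bar> \<le> B \<and> \<bar>f' x\<bar> \<le> B \<and> \<bar>f'' x\<bar> \<le> B" "0 \<le> B"
    and p: "1 \<le> p"
  shows "W2p_norm_le (Omega a b m) p f (3 * (B * max 1 (Omega_length a b m)))"
proof -
  let ?N = "\<lambda>g. Lp_norm (Omega a b m) p g"
  let ?B = "ennreal (B * max 1 (Omega_length a b m))"
  have Omega: "Omega a b m \<in> sets lborel" "emeasure lborel (Omega a b m) \<le> ennreal (Omega_length a b m)"
    "0 \<le> Omega_length a b m"
    using open_Omega emeasure_Omega_le[OF adm] Omega_length_pos[OF adm] by auto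
  have "?N f \<le> ?B" "?N f' \<le> ?B" "?N f'' \<le> ?B"
    using bound
    by (auto intro!: Lp_norm_le_bounded[OF _ Omega _ _ p] borel_measurable_indicator_Omega cont)
  then have "?N f + ?N f' + ?N f'' \<le> ?B + ?B + ?B"
    by (intro add_mono)
  also have "\<dots> = ennreal (3 * (B * max 1 (Omega_length a b m)))"
    using bound(2) by (simp flip: ennreal_plus)
  finally show ?thesis
    unfolding W2p_norm_le_def
    using weak_deriv_Omega[OF adm cont(1,2) deriv(1)] weak_deriv_Omega[OF adm cont(2,3) deriv(2)]
    by (blast intro: borel_measurable_indicator_Omega cont)
qed

section \<open>One-dimensional calculus\<close>

lemma continuous_on_slice_snd:
  assumes "continuous_on (U \<times> V) (\<lambda>(x, t). f x t)" "x \<in> U"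
  shows "continuous_on V (f x)"
proof -
  have "continuous_on V (\<lambda>t. (\<lambda>(x, t). f x t) (x, t))"
    by (rule continuous_on_compose2[OF assms(1)]) (auto intro!: continuous_intros simp: assms(2))
  then show ?thesis by simp
qed

lemma continuous_on_slice_fst:
  assumes "continuous_on (U \<times> V) (\<lambda>(x, t). f x t)" "t \<in> V"
  shows "continuous_on U (\<lambda>x. f x t)"
proof -
  have "continuous_on U (\<lambda>x. (\<lambda>(x, t). f x t) (x, t))"
    by (rule continuous_on_compose2[OF assms(1)]) (auto intro!: continuous_intros simp: assms(2))
  then show ?thesis by simp
qed

lemma deriv_zero_at_max_Neumann:
  fixes f f' :: "real \<Rightarrow> real"
  assumes x0: "x0 \<in> {lo..hi}" and max: "\<And>y. y \<in> {lo..hi} \<Longrightarrow> f y \<le> f x0"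
    and f': "(f has_real_derivative f' x0) (at x0 within {lo..hi})"
    and Neumann: "f' lo = 0" "f' hi = 0"
  shows "f' x0 = 0"
proof (cases "x0 = lo \<or> x0 = hi")
  case False
  with x0 have "lo < x0" "x0 < hi" by auto
  show ?thesis
  proof (rule DERIV_local_max)
    show "DERIV f x0 :> f' x0" using f' \<open>lo < x0\<close> \<open>x0 < hi\<close> by (simp add: at_within_Icc_at)
    show "0 < min (x0 - lo) (hi - x0)" using \<open>lo < x0\<close> \<open>x0 < hi\<close> by simp
    show "\<forall>y. \<bar>x0 - y\<bar> < min (x0 - lo) (hi - x0) \<longrightarrow> f y \<le> f x0"
      using max by (auto simp: abs_if)
  qed
qed (use Neumann in auto)

lemma second_deriv_nonpos_at_max_Neumann:
  fixes f f' f'' :: "real \<Rightarrow> real"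
  assumes "lo < hi" and x0: "x0 \<in> {lo..hi}" and max: "\<And>y. y \<in> {lo..hi} \<Longrightarrow> f y \<le> f x0"
    and f': "\<And>x. x \<in> {lo..hi} \<Longrightarrow> (f has_real_derivative f' x) (at x within {lo..hi})"
    and f'': "(f' has_real_derivative f'' x0) (at x0 within {lo..hi})"
    and Neumann: "f' lo = 0" "f' hi = 0"
  shows "f'' x0 \<le> 0"
proof (rule ccontr)
  assume "\<not> f'' x0 \<le> 0"
  then have pos: "0 < f'' x0" by simp
  have crit: "f' x0 = 0"
    using deriv_zero_at_max_Neumann[OF x0 max f'[OF x0] Neumann] by simp
  have f_cont: "continuous_on {lo..hi} f"
    using f' by (rule DERIV_continuous_on)
  have interior_deriv: "DERIV f x :> f' x" if "lo < x" "x < hi" for x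
    using f'[of x] that by (simp add: at_within_Icc_at)
  show False
  proof (cases "x0 < hi")
    case True
    obtain d where d: "0 < d" "\<And>h. 0 < h \<Longrightarrow> x0 + h \<in> {lo..hi} \<Longrightarrow> h < d \<Longrightarrow> f' x0 < f' (x0 + h)"
      using has_real_derivative_pos_inc_right[OF f'' pos] by blast
    define h where "h = min (d / 2) (hi - x0)"
    have h: "0 < h" "h < d" "x0 + h \<le> hi" using d True by (auto simp: h_def)
    have "f x0 < f (x0 + h)"
    proof (rule DERIV_pos_imp_increasing_open[of x0 "x0 + h" f])
      show "\<exists>y. DERIV f x :> y \<and> 0 < y" if "x0 < x" "x < x0 + h" for x
        using interior_deriv[of x] d(2)[of "x - x0"] that h x0 crit by auto
    qed (use h x0 in \<open>auto intro: continuous_on_subset[OF f_cont]\<close>)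
    with max[of "x0 + h"] h x0 show False by auto
  next
    case False
    with x0 have "x0 = hi" by simp
    obtain d where d: "0 < d" "\<And>h. 0 < h \<Longrightarrow> x0 - h \<in> {lo..hi} \<Longrightarrow> h < d \<Longrightarrow> f' (x0 - h) < f' x0"
      using has_real_derivative_pos_inc_left[OF f'' pos] by blast
    define h where "h = min (d / 2) (x0 - lo)"
    have h: "0 < h" "h < d" "lo \<le> x0 - h" using d \<open>x0 = hi\<close> \<open>lo < hi\<close> by (auto simp: h_def)
    have "f (x0 - h) > f x0"
    proof (rule DERIV_neg_imp_decreasing_open[of "x0 - h" x0 f])
      show "\<exists>y. DERIV f x :> y \<and> y < 0" if "x0 - h < x" "x < x0" for x
        using interior_deriv[of x] d(2)[of "x0 - x"] that h x0 crit by auto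
    qed (use h x0 in \<open>auto intro: continuous_on_subset[OF f_cont]\<close>)
    with max[of "x0 - h"] h x0 show False by auto
  qed
qed

lemma has_real_derivative_integral_param:
  fixes f f' :: "real \<Rightarrow> real \<Rightarrow> real"
  assumes x: "x \<in> {lo..hi}"
    and f: "continuous_on ({lo..hi} \<times> {c..d}) (\<lambda>(x, t). f x t)"
    and f': "continuous_on ({lo..hi} \<times> {c..d}) (\<lambda>(x, t). f' x t)"
    and deriv: "\<And>x t. x \<in> {lo..hi} \<Longrightarrow> t \<in> {c..d} \<Longrightarrow>
                  ((\<lambda>y. f y t) has_real_derivative f' x t) (at x within {lo..hi})"
  shows "((\<lambda>x. integral {c..d} (f x)) has_real_derivative integral {c..d} (f' x)) (at x within {lo..hi})"
  using leibniz_rule_field_derivative[of "{lo..hi}" c d f f' x] deriv f' x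
    integrable_continuous_interval[OF continuous_on_slice_snd[OF f]]
  by simp

section \<open>The nonlocal operator L\<close>

lemma Lop_Omega_eq_sum:
  fixes K \<phi> :: "real \<Rightarrow> real"
  assumes adm: "admissible_intervals a b m" and K: "continuous_on UNIV K"
    and \<phi>: "\<And>j. j < m \<Longrightarrow> continuous_on {a j..b j} \<phi>"
  shows "Lop (Omega a b m) K \<phi> x = (\<Sum>j<m. integral {a j..b j} (\<lambda>y. (\<phi> x - \<phi> y) * K (x - y)))"
  unfolding Lop_def
  by (rule integral_Omega(1)[OF adm])
    (auto intro!: integrable_continuous_interval continuous_intros continuous_on_compose2[OF K] \<phi>)

lemma Lop_integrand_integrable_Omega:
  fixes K \<phi> :: "real \<Rightarrow> real"
  assumes adm: "admissible_intervals a b m" and K: "continuous_on UNIV K"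
    and \<phi>: "\<And>j. j < m \<Longrightarrow> continuous_on {a j..b j} \<phi>"
  shows "(\<lambda>y. (\<phi> x - \<phi> y) * K (x - y)) integrable_on Omega a b m"
  by (rule integral_Omega(2)[OF adm])
    (auto intro!: integrable_continuous_interval continuous_intros continuous_on_compose2[OF K] \<phi>)

lemma continuous_on_Lop:
  fixes K \<phi> :: "real \<Rightarrow> real"
  assumes adm: "admissible_intervals a b m" and K: "continuous_on UNIV K"
    and \<phi>: "\<And>j. j < m \<Longrightarrow> continuous_on {a j..b j} \<phi>" and i: "i < m"
  shows "continuous_on {a i..b i} (Lop (Omega a b m) K \<phi>)"
proof -
  have "continuous_on {a i..b i} (\<lambda>x. integral {a j..b j} (\<lambda>y. (\<phi> x - \<phi> y) * K (x - y)))"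
    if j: "j < m" for j
  proof -
    have "continuous_on ({a i..b i} \<times> {a j..b j}) (\<lambda>z. (\<phi> (fst z) - \<phi> (snd z)) * K (fst z - snd z))"
      by (intro continuous_intros continuous_on_compose2[OF K] continuous_on_compose2[OF \<phi>[OF i]]
          continuous_on_compose2[OF \<phi>[OF j]]) auto
    then have "continuous_on ({a i..b i} \<times> cbox (a j) (b j)) (\<lambda>(x, y). (\<phi> x - \<phi> y) * K (x - y))"
      by (simp add: split_def)
    from integral_continuous_on_param[OF this] show ?thesis by simp
  qed
  then have "continuous_on {a i..b i} (\<lambda>x. \<Sum>j<m. integral {a j..b j} (\<lambda>y. (\<phi> x - \<phi> y) * K (x - y)))"
    by (intro continuous_on_sum) auto
  then show ?thesis
    by (rule continuous_on_eq) (simp add: Lop_Omega_eq_sum[OF adm K \<phi>])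
qed

lemma Lop_nonneg_at_max:
  fixes K \<phi> :: "real \<Rightarrow> real"
  assumes adm: "admissible_intervals a b m" and K: "continuous_on UNIV K" "\<And>z. 0 \<le> K z"
    and \<phi>: "\<And>j. j < m \<Longrightarrow> continuous_on {a j..b j} \<phi>"
    and max: "\<And>y. y \<in> Omega a b m \<Longrightarrow> \<phi> y \<le> \<phi> x0"
  shows "0 \<le> Lop (Omega a b m) K \<phi> x0"
  unfolding Lop_def
  using Lop_integrand_integrable_Omega[OF adm K(1) \<phi>] max K(2)
  by (intro integral_nonneg) auto

lemma abs_Lop_le:
  fixes K \<phi> :: "real \<Rightarrow> real"
  assumes adm: "admissible_intervals a b m" and K: "continuous_on UNIV K" "\<And>z. \<bar>K z\<bar> \<le> C"
    and \<phi>: "\<And>j. j < m \<Longrightarrow> continuous_on {a j..b j} \<phi>"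
    and osc: "\<And>y. y \<in> Omega a b m \<Longrightarrow> \<bar>\<phi> x - \<phi> y\<bar> \<le> S" and "0 \<le> S"
  shows "\<bar>Lop (Omega a b m) K \<phi> x\<bar> \<le> S * C * Omega_length a b m"
proof -
  have "((\<lambda>_. S * C) has_integral S * C * (b i - a i)) {a i..b i}" if "i < m" for i
    using has_integral_const_real[of "S * C" "a i" "b i"] admissible_intervals_lt[OF adm that]
    by (simp add: mult.commute)
  then have "((\<lambda>_. S * C) has_integral S * C * Omega_length a b m) (Omega a b m)"
    using has_integral_Omega[OF adm] by (simp add: Omega_length_def sum_distrib_left)
  then have const: "integral (Omega a b m) (\<lambda>_. S * C) = S * C * Omega_length a b m"
    and "(\<lambda>_. S * C) integrable_on Omega a b m"
    by (rule integral_unique, rule has_integral_integrable)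
  have "norm (Lop (Omega a b m) K \<phi> x) \<le> integral (Omega a b m) (\<lambda>_. S * C)"
    unfolding Lop_def
  proof (rule integral_norm_bound_integral)
    fix y assume "y \<in> Omega a b m"
    then show "norm ((\<phi> x - \<phi> y) * K (x - y)) \<le> S * C"
      using osc K(2) \<open>0 \<le> S\<close> by (simp add: abs_mult mult_mono)
  qed (use Lop_integrand_integrable_Omega[OF adm K(1) \<phi>] \<open>(\<lambda>_. S * C) integrable_on _\<close> in auto)
  also note const
  finally show ?thesis by simp
qed

lemma has_integral_Lop_param:
  fixes K :: "real \<Rightarrow> real" and u :: "real \<Rightarrow> real \<Rightarrow> real"
  assumes adm: "admissible_intervals a b m" and K: "continuous_on UNIV K"
    and u: "\<And>j. j < m \<Longrightarrow> continuous_on ({a j..b j} \<times> {c..d}) (\<lambda>(y, t). u y t)"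
    and x: "i < m" "x \<in> {a i..b i}"
  shows "((\<lambda>t. Lop (Omega a b m) K (\<lambda>y. u y t) x) has_integral
           Lop (Omega a b m) K (\<lambda>y. integral {c..d} (u y)) x) {c..d}"
proof -
  define F where "F t y = (u x t - u y t) * K (x - y)" for t y
  have integral_u_cont: "continuous_on {a j..b j} (\<lambda>y. integral {c..d} (u y))" if "j < m" for j
    using integral_continuous_on_param[of "{a j..b j}" c d u] u[OF that] by simp
  have F: "continuous_on (cbox (c, a j) (d, b j)) (\<lambda>(t, y). F t y)" if j: "j < m" for j
  proof -
    have "continuous_on (cbox (a j, c) (b j, d)) (\<lambda>(y, t). F t y)"
      using u[OF j] continuous_on_slice_snd[OF u[OF x(1)] x(2)]
      unfolding F_def
      by (auto simp: split_def cbox_Pair_eq intro!: continuous_intros continuous_on_compose2[OF K]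
          continuous_on_compose2[of "{c..d}" "u x"])
    then show ?thesis by (rule swap_continuous)
  qed
  have sum: "Lop (Omega a b m) K (\<lambda>y. u y t) x = (\<Sum>j<m. integral {a j..b j} (F t))"
    if "t \<in> {c..d}" for t
    unfolding F_def using continuous_on_slice_fst[OF u that] by (rule Lop_Omega_eq_sum[OF adm K])
  have "((\<lambda>t. \<Sum>j<m. integral {a j..b j} (F t)) has_integral
          (\<Sum>j<m. integral {c..d} (\<lambda>t. integral {a j..b j} (F t)))) {c..d}"
    using integral_integrable_2dim[OF F] by (intro has_integral_sum) auto
  also have "(\<Sum>j<m. integral {c..d} (\<lambda>t. integral {a j..b j} (F t)))
      = (\<Sum>j<m. integral {a j..b j} (\<lambda>y. (integral {c..d} (u x) - integral {c..d} (u y)) * K (x - y)))"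
  proof (rule sum.cong)
    fix j assume "j \<in> {..<m}"
    then have j: "j < m" by simp
    have "integral {c..d} (\<lambda>t. integral {a j..b j} (F t))
        = integral {a j..b j} (\<lambda>y. integral {c..d} (\<lambda>t. F t y))"
      using integral_swap_continuous[OF F[OF j]] by simp
    also have "\<dots> = integral {a j..b j} (\<lambda>y. (integral {c..d} (u x) - integral {c..d} (u y)) * K (x - y))"
      unfolding F_def
      using continuous_on_slice_snd[OF u[OF x(1)] x(2)] continuous_on_slice_snd[OF u[OF j]]
      by (intro integral_cong) (simp add: integral_diff integrable_continuous_interval)
    finally show "integral {c..d} (\<lambda>t. integral {a j..b j} (F t))
      = integral {a j..b j} (\<lambda>y. (integral {c..d} (u x) - integral {c..d} (u y)) * K (x - y))" .
  qed simp
  also have "\<dots> = Lop (Omega a b m) K (\<lambda>y. integral {c..d} (u y)) x"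
    by (rule Lop_Omega_eq_sum[OF adm K, symmetric]) (rule integral_u_cont)
  finally show ?thesis
    by (rule has_integral_eq[rotated]) (simp add: sum)
qed

lemma K_hypD:
  assumes "K_hyp K c_K C_K"
  shows "continuous_on UNIV K" "\<And>z. 0 < K z" "\<And>z. K z < C_K"
  using assms unfolding K_hyp_def
  by (auto intro: less_trans has_real_derivative_imp_continuous_on)

lemma bdd_above_abs_Omega_times:
  fixes f :: "real \<Rightarrow> real \<Rightarrow> real"
  assumes "\<And>i. i < m \<Longrightarrow> continuous_on ({a i..b i} \<times> {c..d}) (\<lambda>(x, t). f x t)"
  shows "bdd_above ((\<lambda>z. \<bar>f (fst z) (snd z)\<bar>) ` (Omega a b m \<times> {c<..<d}))"
proof -
  define U where "U = (\<Union>i<m. {a i..b i} \<times> {c..d})"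
  have "continuous_on U (\<lambda>z. \<bar>f (fst z) (snd z)\<bar>)"
    unfolding U_def
    using assms by (intro continuous_on_closed_Union continuous_intros) (auto simp: split_def closed_Times)
  then have "bdd_above ((\<lambda>z. \<bar>f (fst z) (snd z)\<bar>) ` U)"
    unfolding U_def
    by (intro bounded_imp_bdd_above compact_imp_bounded compact_continuous_image compact_UN compact_Times)
      auto
  moreover have "Omega a b m \<times> {c<..<d} \<subseteq> U"
    unfolding U_def using Omega_subset_Icc[of a b m] by fastforce
  ultimately show ?thesis by (meson bdd_above_mono image_mono)
qed

lemma R_hypD:
  assumes R: "R_hyp a b m A R C_R" and adm: "admissible_intervals a b m" and "0 < A"
  shows "\<And>i. i < m \<Longrightarrow> continuous_on ({a i..b i} \<times> {-A..A}) (\<lambda>(x, t). R x t)"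
    and "\<And>i x t. i < m \<Longrightarrow> x \<in> {a i..b i} \<Longrightarrow> t \<in> {-A..A} \<Longrightarrow> \<bar>R x t\<bar> \<le> C_R"
proof -
  let ?Q = "Omega a b m \<times> {-A<..<A}"
  let ?sup = "\<lambda>g. SUP z\<in>?Q. \<bar>g (fst z) (snd z)\<bar>"
  obtain Rx Rt where cont: "\<And>i. i < m \<Longrightarrow> continuous_on ({a i..b i} \<times> {-A..A}) (\<lambda>(x, t). R x t)
           \<and> continuous_on ({a i..b i} \<times> {-A..A}) (\<lambda>(x, t). Rx x t)
           \<and> continuous_on ({a i..b i} \<times> {-A..A}) (\<lambda>(x, t). Rt x t)"
    and sum: "?sup R + ?sup Rx + ?sup Rt < C_R"
    using R unfolding R_hyp_def by blast
  then show R_cont: "\<And>i. i < m \<Longrightarrow> continuous_on ({a i..b i} \<times> {-A..A}) (\<lambda>(x, t). R x t)"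
    by blast
  have "0 < m" using adm unfolding admissible_intervals_def by simp
  then have z0: "((a 0 + b 0) / 2, 0) \<in> ?Q"
    using Ioo_subset_Omega[of 0 m a b] admissible_intervals_lt[OF adm] \<open>0 < A\<close> by auto
  have "0 \<le> ?sup Rx" "0 \<le> ?sup Rt"
    using cont by (auto intro!: cSUP_upper2[OF _ z0] bdd_above_abs_Omega_times)
  with sum have sup_R: "?sup R \<le> C_R" by linarith
  fix i x t assume i: "i < m" and xt: "x \<in> {a i..b i}" "t \<in> {-A..A}"
  have closure: "closure ({a i<..<b i} \<times> {-A<..<A}) = {a i..b i} \<times> {-A..A}"
    using admissible_intervals_lt[OF adm i] \<open>0 < A\<close> by (simp add: closure_Times)
  have "\<bar>R (fst (x, t)) (snd (x, t))\<bar> \<le> C_R"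
  proof (rule continuous_le_on_closure[of "{a i<..<b i} \<times> {-A<..<A}"])
    show "continuous_on (closure ({a i<..<b i} \<times> {-A<..<A})) (\<lambda>z. \<bar>R (fst z) (snd z)\<bar>)"
      unfolding closure using R_cont[OF i] by (auto simp: split_def intro: continuous_intros)
    show "(x, t) \<in> closure ({a i<..<b i} \<times> {-A<..<A})"
      unfolding closure using xt by simp
    fix z assume "z \<in> {a i<..<b i} \<times> {-A<..<A}"
    then have "z \<in> ?Q" using Ioo_subset_Omega[OF i] by auto
    have "\<bar>R (fst z) (snd z)\<bar> \<le> ?sup R"
      using cont by (intro cSUP_upper[OF \<open>z \<in> ?Q\<close>] bdd_above_abs_Omega_times) blast
    with sup_R show "\<bar>R (fst z) (snd z)\<bar> \<le> C_R" by linarith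
  qed
  then show "\<bar>R x t\<bar> \<le> C_R" by simp
qed

section \<open>Integrating (E) in theta\<close>

(* Dominates C_R and the bounds on |rho''| and |rho'| proved in abs_rho_xx_le and abs_rho_x_le. *)
definition rho_C2_bound :: "real \<Rightarrow> real \<Rightarrow> real \<Rightarrow> real" where
  "rho_C2_bound C_R C_K L = C_R + (C_R * C_K * L + 2 * C_R\<^sup>2) * (1 + L) + 1"

lemma rho_C2_bound_pos: "0 \<le> C_R \<Longrightarrow> 0 \<le> C_K \<Longrightarrow> 0 \<le> L \<Longrightarrow> 0 < rho_C2_bound C_R C_K L"
  unfolding rho_C2_bound_def by (simp add: add_nonneg_pos)

locale E_solution =
  fixes a b :: "nat \<Rightarrow> real" and m :: nat and A :: real
    and K :: "real \<Rightarrow> real" and C_K :: real and R :: "real \<Rightarrow> real \<Rightarrow> real" and C_R :: real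
    and \<epsilon> :: real and n nx nxx nt ntt :: "real \<Rightarrow> real \<Rightarrow> real"
  assumes A: "0 < A" and adm: "admissible_intervals a b m"
    and K: "continuous_on UNIV K" "\<And>z. 0 < K z" "\<And>z. K z < C_K"
    and R: "\<And>i. i < m \<Longrightarrow> continuous_on ({a i..b i} \<times> {-A..A}) (\<lambda>(x, t). R x t)"
      "\<And>i x t. i < m \<Longrightarrow> x \<in> {a i..b i} \<Longrightarrow> t \<in> {-A..A} \<Longrightarrow> \<bar>R x t\<bar> \<le> C_R"
    and C2: "C2_neumann_2d a b m A n nx nxx nt ntt"
    and eq: "\<forall>x\<in>Omega a b m. \<forall>t\<in>{-A<..<A}.
         - \<epsilon>\<^sup>2 * ntt x t - nxx x t + Lop (Omega a b m) K (\<lambda>y. n y t) x = n x t * (R x t - rho_of A n x)"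
    and pos: "\<forall>x\<in>Omega a b m. \<forall>t\<in>{-A<..<A}. 0 < n x t"
begin

abbreviation "\<Omega> \<equiv> Omega a b m"
abbreviation "rho \<equiv> rho_of A n"

definition "rho_x x = integral {-A..A} (nx x)"
definition "rho_xx x = integral {-A..A} (nxx x)"

lemma continuous_on_n:
  "i < m \<Longrightarrow> f \<in> {n, nx, nxx, nt, ntt} \<Longrightarrow> continuous_on ({a i..b i} \<times> {-A..A}) (\<lambda>(x, t). f x t)"
  using C2 unfolding C2_neumann_2d_def by blast

lemma n_derivs:
  assumes "i < m" "x \<in> {a i..b i}" "t \<in> {-A..A}"
  shows "((\<lambda>y. n y t) has_real_derivative nx x t) (at x within {a i..b i})"
    "((\<lambda>y. nx y t) has_real_derivative nxx x t) (at x within {a i..b i})"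
    "(n x has_real_derivative nt x t) (at t within {-A..A})"
    "(nt x has_real_derivative ntt x t) (at t within {-A..A})"
  using C2 assms unfolding C2_neumann_2d_def by auto

lemma integrable_n_slice:
  "i < m \<Longrightarrow> x \<in> {a i..b i} \<Longrightarrow> f \<in> {n, nx, nxx, nt, ntt} \<Longrightarrow> f x integrable_on {-A..A}"
  by (rule integrable_continuous_interval, rule continuous_on_slice_snd[OF continuous_on_n])

lemma continuous_on_rho:
  assumes "i < m"
  shows "continuous_on {a i..b i} rho" "continuous_on {a i..b i} rho_x" "continuous_on {a i..b i} rho_xx"
proof -
  have "continuous_on {a i..b i} (\<lambda>x. integral {-A..A} (f x))" if "f \<in> {n, nx, nxx, nt, ntt}" for f
    using integral_continuous_on_param[of "{a i..b i}" "-A" A f] continuous_on_n[OF assms that] by simp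
  then show "continuous_on {a i..b i} rho" "continuous_on {a i..b i} rho_x" "continuous_on {a i..b i} rho_xx"
    unfolding rho_of_def rho_x_def rho_xx_def by auto
qed

lemma rho_has_derivative:
  assumes "i < m" "x \<in> {a i..b i}"
  shows "(rho has_real_derivative rho_x x) (at x within {a i..b i})"
    "(rho_x has_real_derivative rho_xx x) (at x within {a i..b i})"
  unfolding rho_of_def rho_x_def rho_xx_def
  by (rule has_real_derivative_integral_param[OF assms(2) continuous_on_n[OF assms(1)]
        continuous_on_n[OF assms(1)] n_derivs(1)[OF assms(1)]]; simp)
     (rule has_real_derivative_integral_param[OF assms(2) continuous_on_n[OF assms(1)]
        continuous_on_n[OF assms(1)] n_derivs(2)[OF assms(1)]]; simp)

lemma rho_x_Neumann: "i < m \<Longrightarrow> rho_x (a i) = 0 \<and> rho_x (b i) = 0"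
  using C2 unfolding rho_x_def C2_neumann_2d_def
  by (auto intro!: integral_spike[of "{-A, A}", where g = "\<lambda>_. 0", simplified])

lemma n_nonneg:
  assumes i: "i < m" and xt: "x \<in> {a i..b i}" "t \<in> {-A..A}"
  shows "0 \<le> n x t"
proof -
  have closure: "closure ({a i<..<b i} \<times> {-A<..<A}) = {a i..b i} \<times> {-A..A}"
    using admissible_intervals_lt[OF adm i] A by (simp add: closure_Times)
  have "0 \<le> (\<lambda>(x, t). n x t) (x, t)"
  proof (rule continuous_ge_on_closure[of "{a i<..<b i} \<times> {-A<..<A}"])
    show "continuous_on (closure ({a i<..<b i} \<times> {-A<..<A})) (\<lambda>(x, t). n x t)"
      unfolding closure using continuous_on_n[OF i] by simp
    show "(x, t) \<in> closure ({a i<..<b i} \<times> {-A<..<A})"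
      unfolding closure using xt by simp
    show "0 \<le> (\<lambda>(x, t). n x t) z" if "z \<in> {a i<..<b i} \<times> {-A<..<A}" for z
      using pos Ioo_subset_Omega[OF i, of a b] that by (auto intro: less_imp_le)
  qed
  then show ?thesis by simp
qed

lemma rho_nonneg: "i < m \<Longrightarrow> x \<in> {a i..b i} \<Longrightarrow> 0 \<le> rho x"
  unfolding rho_of_def
  by (rule integral_nonneg)
    (auto intro: n_nonneg integrable_n_slice)

lemma rho_equation_interior:
  assumes i: "i < m" and x: "x \<in> {a i<..<b i}"
  shows "- rho_xx x + Lop \<Omega> K rho x = integral {-A..A} (\<lambda>t. n x t * R x t) - (rho x)\<^sup>2"
proof -
  have x\<Omega>: "x \<in> \<Omega>" and xI: "x \<in> {a i..b i}" using Ioo_subset_Omega[OF i, of a b] x by auto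
  have "(ntt x has_integral nt x A - nt x (-A)) {-A..A}"
    using A n_derivs(4)[OF i xI]
    by (intro fundamental_theorem_of_calculus)
      (auto simp: has_real_derivative_iff_has_vector_derivative[symmetric])
  then have "(ntt x has_integral 0) {-A..A}"
    using C2 x\<Omega> unfolding C2_neumann_2d_def by simp
  moreover have "(nxx x has_integral rho_xx x) {-A..A}"
    unfolding rho_xx_def using integrable_n_slice[OF i xI] by (simp add: integrable_integral)
  moreover have "((\<lambda>t. Lop \<Omega> K (\<lambda>y. n y t) x) has_integral Lop \<Omega> K rho x) {-A..A}"
    unfolding rho_of_def using continuous_on_n by (intro has_integral_Lop_param[OF adm K(1) _ i xI]) simp
  ultimately have "((\<lambda>t. - \<epsilon>\<^sup>2 * ntt x t - nxx x t + Lop \<Omega> K (\<lambda>y. n y t) x) has_integral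
      - \<epsilon>\<^sup>2 * 0 - rho_xx x + Lop \<Omega> K rho x) {-A..A}"
    by (intro has_integral_add has_integral_diff has_integral_mult_right)
  then have "((\<lambda>t. n x t * R x t - n x t * rho x) has_integral
      - \<epsilon>\<^sup>2 * 0 - rho_xx x + Lop \<Omega> K rho x) {-A..A}"
  proof (rule has_integral_spike_finite[where S = "{-A, A}", rotated 2])
    fix t assume "t \<in> {-A..A} - {-A, A}"
    with eq x\<Omega> show "n x t * R x t - n x t * rho x = - \<epsilon>\<^sup>2 * ntt x t - nxx x t + Lop \<Omega> K (\<lambda>y. n y t) x"
      by (simp add: right_diff_distrib)
  qed simp
  moreover have "((\<lambda>t. n x t * R x t - n x t * rho x) has_integral
      integral {-A..A} (\<lambda>t. n x t * R x t) - (rho x)\<^sup>2) {-A..A}"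
  proof (rule has_integral_diff)
    show "((\<lambda>t. n x t * R x t) has_integral integral {-A..A} (\<lambda>t. n x t * R x t)) {-A..A}"
      using continuous_on_slice_snd[OF continuous_on_n[OF i] xI] continuous_on_slice_snd[OF R(1)[OF i] xI]
      by (intro integrable_integral integrable_continuous_interval continuous_intros) auto
    show "((\<lambda>t. n x t * rho x) has_integral (rho x)\<^sup>2) {-A..A}"
      unfolding rho_of_def power2_eq_square using integrable_n_slice[OF i xI]
      by (intro has_integral_mult_left) (simp add: integrable_integral)
  qed
  ultimately have "- \<epsilon>\<^sup>2 * 0 - rho_xx x + Lop \<Omega> K rho x = integral {-A..A} (\<lambda>t. n x t * R x t) - (rho x)\<^sup>2"
    by (rule has_integral_unique)
  then show ?thesis by simp
qed

lemma continuous_on_integral_nR: "i < m \<Longrightarrow> continuous_on {a i..b i} (\<lambda>x. integral {-A..A} (\<lambda>t. n x t * R x t))"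
  using integral_continuous_on_param[of "{a i..b i}" "-A" A "\<lambda>x t. n x t * R x t"]
    continuous_on_mult[OF continuous_on_n[of i n] R(1)]
  by (simp add: split_def)

lemma rho_equation:
  assumes i: "i < m" and x: "x \<in> {a i..b i}"
  shows "- rho_xx x + Lop \<Omega> K rho x = integral {-A..A} (\<lambda>t. n x t * R x t) - (rho x)\<^sup>2"
proof -
  have closure: "closure {a i<..<b i} = {a i..b i}"
    using admissible_intervals_lt[OF adm i] by simp
  let ?h = "\<lambda>x. - rho_xx x + Lop \<Omega> K rho x - integral {-A..A} (\<lambda>t. n x t * R x t) + (rho x)\<^sup>2"
  have "continuous_on (closure {a i<..<b i}) ?h"
    unfolding closure
    by (intro continuous_intros continuous_on_rho[OF i] continuous_on_Lop[OF adm K(1) continuous_on_rho(1) i]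
        continuous_on_integral_nR[OF i])
  then have "?h x = 0"
  proof (rule continuous_constant_on_closure)
    show "?h y = 0" if "y \<in> {a i<..<b i}" for y
      using rho_equation_interior[OF i that] by simp
    show "x \<in> closure {a i<..<b i}" using closure x by simp
  qed
  then show ?thesis by simp
qed

lemma C_R_nonneg: "0 \<le> C_R"
  using R(2)[of 0 "a 0" 0] admissible_intervals_lt[OF adm, of 0] A adm
  unfolding admissible_intervals_def by auto

lemma abs_integral_nR_le:
  assumes i: "i < m" and x: "x \<in> {a i..b i}"
  shows "\<bar>integral {-A..A} (\<lambda>t. n x t * R x t)\<bar> \<le> C_R * rho x"
proof -
  have "norm (integral {-A..A} (\<lambda>t. n x t * R x t)) \<le> integral {-A..A} (\<lambda>t. C_R * n x t)"
  proof (rule integral_norm_bound_integral)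
    show "(\<lambda>t. n x t * R x t) integrable_on {-A..A}"
      using continuous_on_slice_snd[OF continuous_on_n[OF i] x] continuous_on_slice_snd[OF R(1)[OF i] x]
      by (intro integrable_continuous_interval continuous_intros) auto
    have "n x integrable_on {-A..A}" using integrable_n_slice[OF i x] by simp
    from integrable_on_cmult_left[OF this, of C_R]
    show "(\<lambda>t. C_R * n x t) integrable_on {-A..A}" by simp
    fix t assume t: "t \<in> {-A..A}"
    show "norm (n x t * R x t) \<le> C_R * n x t"
      using n_nonneg[OF i x t] R(2)[OF i x t] by (simp add: abs_mult mult.commute[of C_R] mult_left_mono)
  qed
  then show ?thesis unfolding rho_of_def by simp
qed

lemma rho_le_C_R:
  assumes i: "i < m" and x: "x \<in> {a i..b i}"
  shows "rho x \<le> C_R"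
proof -
  define U where "U = (\<Union>j<m. {a j..b j})"
  have "0 < m" using adm unfolding admissible_intervals_def by simp
  then have "U \<noteq> {}"
    using admissible_intervals_lt[OF adm, of 0] unfolding U_def by fastforce
  moreover have "compact U" "continuous_on U rho"
    unfolding U_def using continuous_on_rho(1) by (auto intro!: compact_UN continuous_on_closed_Union)
  ultimately obtain x0 where "x0 \<in> U" and max: "\<And>y. y \<in> U \<Longrightarrow> rho y \<le> rho x0"
    using continuous_attains_sup[of U rho] by blast
  then obtain k where k: "k < m" "x0 \<in> {a k..b k}" unfolding U_def by blast
  have max_k: "\<And>y. y \<in> {a k..b k} \<Longrightarrow> rho y \<le> rho x0"
    using max k(1) unfolding U_def by blast
  have "rho_xx x0 \<le> 0"
    using rho_x_Neumann[OF k(1)]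
    by (intro second_deriv_nonpos_at_max_Neumann[where f'' = rho_xx, OF admissible_intervals_lt[OF adm k(1)] k(2) max_k
          rho_has_derivative(1)[OF k(1)] rho_has_derivative(2)[OF k]]) auto
  moreover have "0 \<le> Lop \<Omega> K rho x0"
  proof (rule Lop_nonneg_at_max[OF adm K(1) _ continuous_on_rho(1)])
    show "0 \<le> K z" for z using K(2)[of z] by simp
    show "rho y \<le> rho x0" if "y \<in> \<Omega>" for y
      using max that Omega_subset_Icc[of a b m] unfolding U_def by blast
  qed
  ultimately have "(rho x0)\<^sup>2 \<le> C_R * rho x0"
    using rho_equation[OF k] abs_integral_nR_le[OF k] by linarith
  then have "rho x0 \<le> C_R"
    using rho_nonneg[OF k] C_R_nonneg by (auto simp: power2_eq_square mult_le_cancel_right)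
  moreover have "rho x \<le> rho x0" using max i x unfolding U_def by blast
  ultimately show ?thesis by simp
qed

lemma abs_rho_xx_le:
  assumes i: "i < m" and x: "x \<in> {a i..b i}"
  shows "\<bar>rho_xx x\<bar> \<le> C_R * C_K * Omega_length a b m + 2 * C_R\<^sup>2"
proof -
  have rho_bounds: "0 \<le> rho y \<and> rho y \<le> C_R" if "y \<in> \<Omega>" for y
    using that Omega_subset_Icc[of a b m] rho_nonneg rho_le_C_R by blast
  have "\<bar>Lop \<Omega> K rho x\<bar> \<le> C_R * C_K * Omega_length a b m"
  proof (rule abs_Lop_le[OF adm K(1) _ continuous_on_rho(1) _ C_R_nonneg])
    show "\<bar>K z\<bar> \<le> C_K" for z using K(2,3)[of z] by simp
    show "\<bar>rho x - rho y\<bar> \<le> C_R" if "y \<in> \<Omega>" for y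
      using rho_bounds[OF that] rho_nonneg[OF i x] rho_le_C_R[OF i x] by linarith
  qed
  moreover have "(rho x)\<^sup>2 \<le> C_R\<^sup>2"
    using rho_nonneg[OF i x] rho_le_C_R[OF i x] by (simp add: power_mono)
  moreover have "C_R * rho x \<le> C_R\<^sup>2"
    using rho_le_C_R[OF i x] C_R_nonneg by (simp add: power2_eq_square mult_left_mono)
  ultimately show ?thesis
    using rho_equation[OF i x] abs_integral_nR_le[OF i x] by (smt (verit) zero_le_power2)
qed

lemma abs_rho_x_le:
  assumes i: "i < m" and x: "x \<in> {a i..b i}"
  shows "\<bar>rho_x x\<bar> \<le> (C_R * C_K * Omega_length a b m + 2 * C_R\<^sup>2) * Omega_length a b m"
proof -
  have "norm (rho_x x - rho_x (a i)) \<le> (C_R * C_K * Omega_length a b m + 2 * C_R\<^sup>2) * norm (x - a i)"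
    using rho_has_derivative(2)[OF i] abs_rho_xx_le[OF i] x admissible_intervals_lt[OF adm i]
    by (intro field_differentiable_bound[of "{a i..b i}"]) auto
  also have "\<dots> \<le> (C_R * C_K * Omega_length a b m + 2 * C_R\<^sup>2) * Omega_length a b m"
    using x interval_length_le_Omega_length[OF adm i] C_R_nonneg K(2,3)[of 0]
      Omega_length_pos[OF adm]
    by (intro mult_left_mono) auto
  finally show ?thesis using rho_x_Neumann[OF i] by simp
qed

lemma W2p_norm_le_rho:
  assumes "1 \<le> p"
  shows "W2p_norm_le \<Omega> p rho
           (3 * (rho_C2_bound C_R C_K (Omega_length a b m) * max 1 (Omega_length a b m)))"
proof (rule W2p_norm_le_of_C2[OF adm continuous_on_rho rho_has_derivative _ _ assms])
  let ?L = "Omega_length a b m"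
  define B where "B = C_R * C_K * ?L + 2 * C_R\<^sup>2"
  have "0 \<le> B" "0 < ?L"
    unfolding B_def using C_R_nonneg K(2,3)[of 0] Omega_length_pos[OF adm] by simp_all
  then have B: "0 \<le> B * (1 + ?L)" "B \<le> B * (1 + ?L)" "B * ?L \<le> B * (1 + ?L)"
    by (simp_all add: distrib_left)
  show "\<bar>rho x\<bar> \<le> rho_C2_bound C_R C_K ?L \<and> \<bar>rho_x x\<bar> \<le> rho_C2_bound C_R C_K ?L
        \<and> \<bar>rho_xx x\<bar> \<le> rho_C2_bound C_R C_K ?L" if x: "x \<in> \<Omega>" for x
  proof -
    obtain i where i: "i < m" "x \<in> {a i..b i}" using x Omega_subset_Icc[of a b m] by blast
    show ?thesis
      using rho_nonneg[OF i] rho_le_C_R[OF i] abs_rho_x_le[OF i, folded B_def]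
        abs_rho_xx_le[OF i, folded B_def] B
      unfolding rho_C2_bound_def B_def[symmetric] by linarith
  qed
  show "0 \<le> rho_C2_bound C_R C_K ?L"
    using rho_C2_bound_pos C_R_nonneg K(2,3)[of 0] Omega_length_pos[OF adm] by (simp add: less_imp_le)
qed

end

lemma rho_bounds_of_pos_bdd_sol_E:
  assumes "0 < A" "admissible_intervals a b m" "R_hyp a b m A R C_R" "K_hyp K c_K C_K"
    and "pos_bdd_sol_E a b m A K R \<epsilon> n"
  shows "\<forall>x\<in>Omega a b m. 0 \<le> rho_of A n x \<and> rho_of A n x \<le> C_R"
    and "\<And>p. 1 \<le> p \<Longrightarrow> W2p_norm_le (Omega a b m) p (rho_of A n)
           (3 * (rho_C2_bound C_R C_K (Omega_length a b m) * max 1 (Omega_length a b m)))"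
proof -
  obtain nx nxx nt ntt where "C2_neumann_2d a b m A n nx nxx nt ntt"
    and "\<forall>x\<in>Omega a b m. \<forall>t\<in>{-A<..<A}.
           - \<epsilon>\<^sup>2 * ntt x t - nxx x t + Lop (Omega a b m) K (\<lambda>y. n y t) x = n x t * (R x t - rho_of A n x)"
    and "\<forall>x\<in>Omega a b m. \<forall>t\<in>{-A<..<A}. 0 < n x t"
    using assms(5) unfolding pos_bdd_sol_E_def by blast
  then interpret E_solution a b m A K C_K R C_R \<epsilon> n nx nxx nt ntt
    using assms(1,2) K_hypD[OF assms(4)] R_hypD[OF assms(3,2,1)] by unfold_locales auto
  show "\<forall>x\<in>Omega a b m. 0 \<le> rho_of A n x \<and> rho_of A n x \<le> C_R"
    using Omega_subset_Icc[of a b m] rho_nonneg rho_le_C_R by blast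
  show "W2p_norm_le (Omega a b m) p (rho_of A n)
          (3 * (rho_C2_bound C_R C_K (Omega_length a b m) * max 1 (Omega_length a b m)))" if "1 \<le> p" for p
    using W2p_norm_le_rho[OF that] .
qed

theorem lemma3:
  fixes a b :: "nat \<Rightarrow> real" and m :: nat and A C_R c_K C_K \<theta>0 \<epsilon>0 :: real
    and R :: "real \<Rightarrow> real \<Rightarrow> real" and K :: "real \<Rightarrow> real"
    and n :: "real \<Rightarrow> real \<Rightarrow> real \<Rightarrow> real"
  assumes "A > 0"
    and "admissible_intervals a b m"
    and "R_hyp a b m A R C_R"
    and "K_hyp K c_K C_K"
    and "\<theta>0 \<in> {-A<..<A}"
    and "\<forall>\<theta>\<in>{-A<..<A}. lambda_pe a b m K R \<theta>0 (\<lambda>_. 0) \<le> lambda_pe a b m K R \<theta> (\<lambda>_. 0)"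
    and "lambda_pe a b m K R \<theta>0 (\<lambda>_. 0) < 0"
    and "\<epsilon>0 > 0"
    and "\<forall>\<epsilon>\<in>{0<..<\<epsilon>0}. mu_pe a b m A K R \<epsilon> < lambda_pe a b m K R \<theta>0 (\<lambda>_. 0) / 2"
    and "\<forall>\<epsilon>\<in>{0<..<\<epsilon>0}. pos_bdd_sol_E a b m A K R \<epsilon> (n \<epsilon>)"
  shows "(\<forall>\<epsilon>\<in>{0<..<\<epsilon>0}. \<forall>x\<in>Omega a b m.
            0 \<le> rho_of A (n \<epsilon>) x \<and> rho_of A (n \<epsilon>) x \<le> C_R)
       \<and> (\<forall>p::ennreal. p \<ge> 1 \<longrightarrow>
            (\<exists>C>0. \<exists>\<epsilon>1>0. \<forall>\<epsilon>. 0 < \<epsilon> \<and> \<epsilon> < \<epsilon>1 \<and> \<epsilon> < \<epsilon>0 \<longrightarrow>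
               W2p_norm_le (Omega a b m) p (rho_of A (n \<epsilon>)) C))"
proof -
  note bounds = rho_bounds_of_pos_bdd_sol_E[OF assms(1-4) assms(10)[rule_format]]
  define L where "L = Omega_length a b m"
  define C where "C = 3 * (rho_C2_bound C_R C_K L * max 1 L)"
  have "0 \<le> C_R"
    using R_hypD(2)[OF assms(3,2,1), of 0 "a 0" 0] assms(1,2) admissible_intervals_lt[OF assms(2), of 0]
    unfolding admissible_intervals_def by auto
  moreover have "0 < C_K" using K_hypD(2,3)[OF assms(4), of 0] by simp
  ultimately have "0 < C"
    using rho_C2_bound_pos[of C_R C_K L] Omega_length_pos[OF assms(2)]
    unfolding C_def L_def by (intro mult_pos_pos) auto
  show ?thesis
  proof (rule conjI; intro ballI allI impI)
    fix \<epsilon> x assume "\<epsilon> \<in> {0<..<\<epsilon>0}" "x \<in> Omega a b m"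
    then show "0 \<le> rho_of A (n \<epsilon>) x \<and> rho_of A (n \<epsilon>) x \<le> C_R"
      using bounds(1) by blast
  next
    fix p :: ennreal assume "1 \<le> p"
    then have "W2p_norm_le (Omega a b m) p (rho_of A (n \<epsilon>)) C" if "0 < \<epsilon>" "\<epsilon> < \<epsilon>0" for \<epsilon>
      using bounds(2) that unfolding C_def L_def by simp
    then show "\<exists>C>0. \<exists>\<epsilon>1>0. \<forall>\<epsilon>. 0 < \<epsilon> \<and> \<epsilon> < \<epsilon>1 \<and> \<epsilon> < \<epsilon>0 \<longrightarrow>
                 W2p_norm_le (Omega a b m) p (rho_of A (n \<epsilon>)) C"
      using \<open>0 < C\<close> assms(8) by blast
  qed
qed

end
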